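(* Let $l<u$ be real, let $\Delta Q$ be real with $0<\Delta Q\le u-l$, and let $\epsilon\ge0$, $0\le\delta<1$ with $\frac{e^\epsilon}{1-\delta}>1$. Let $b_0=\frac{\Delta Q}{\epsilon-\log(1-\delta)}$. Then $f$ is defined and continuous on $[b_0,\infty)$, and there exists a unique $b^*\in[b_0,f(b_0)]$ with $f(b^* )=b^*$. Moreover $b^*=b_0=f(b_0)$ if and only if $\Delta Q=u-l$.
   Context: For $b>0$ and $p\in[l,u]$, $C_p(b)= 1-\frac12\left(e^{-\frac{p-l}{b}}+e^{-\frac{u-p}{b}}\right)$ (the integral $\int_l^u\frac{1}{2b}e^{-|x-p|/b}dx$), and $\Delta C(b)=\frac{C_{l+\Delta Q}(b)}{C_l(b)}$. The map $f$ is defined for $b>0$ with $\epsilon-\log\Delta C(b)-\log(1-\delta)\neq 0$ by $f(b)=\frac{\Delta Q}{\epsilon-\log\Delta C(b)-\log(1-\delta)}$. *)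

theory Defs
  imports "HOL-Analysis.Analysis"
begin

text \<open>C_p(b) = 1 - (exp(-(p-l)/b) + exp(-(u-p)/b))/2, the Laplace(p,b) mass of [l,u].\<close>
definition Cp :: "real \<Rightarrow> real \<Rightarrow> real \<Rightarrow> real \<Rightarrow> real" where
  "Cp l u p b = 1 - (exp (- (p - l) / b) + exp (- (u - p) / b)) / 2"

definition DeltaC :: "real \<Rightarrow> real \<Rightarrow> real \<Rightarrow> real \<Rightarrow> real" where
  "DeltaC l u dQ b = Cp l u (l + dQ) b / Cp l u l b"

definition fmap :: "real \<Rightarrow> real \<Rightarrow> real \<Rightarrow> real \<Rightarrow> real \<Rightarrow> real \<Rightarrow> real" where
  "fmap l u dQ eps delta b = dQ / (eps - ln (DeltaC l u dQ b) - ln (1 - delta))"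

end

theory Submission
  imports Defs
begin

text \<open>Writing \<open>X = exp (-\<Delta>Q/b)\<close> and \<open>Y = exp (-(u-l-\<Delta>Q)/b)\<close>, the ratio \<open>\<Delta>C(b)\<close> becomes
  \<open>(2-X-Y)/(1-XY) = 1 + (1-X)(1-Y)/(1-XY)\<close>. Hence \<open>1 \<le> \<Delta>C(b) < 1/X\<close>, with equality on the left
  exactly when \<open>Y = 1\<close>, i.e. \<open>\<Delta>Q = u-l\<close>; and \<open>\<Delta>C\<close> decreases in \<open>b\<close>. With
  \<open>K = \<epsilon> - log(1-\<delta>) > 0\<close> the second bound gives \<open>log \<Delta>C(b) < \<Delta>Q/b \<le> K\<close> for \<open>b \<ge> b\<^sub>0 = \<Delta>Q/K\<close>,
  so \<open>f\<close> is defined there, the first gives \<open>f(b) \<ge> b\<^sub>0\<close>, and monotonicity makes \<open>f\<close> antitone.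
  A continuous antitone map of \<open>[b\<^sub>0, f(b\<^sub>0)]\<close> has exactly one fixed point there (IVT for
  \<open>f(b) - b\<close>, which is strictly decreasing); and \<open>f(b\<^sub>0) = b\<^sub>0\<close> iff \<open>\<Delta>C(b\<^sub>0) = 1\<close>.\<close>

lemma ex1_fixed_point_antimono:
  fixes f :: "real \<Rightarrow> real"
  assumes cont: "continuous_on {a..f a} f" and "a \<le> f a"
    and antimono: "\<And>x y. a \<le> x \<Longrightarrow> x \<le> y \<Longrightarrow> y \<le> f a \<Longrightarrow> f y \<le> f x"
  shows "\<exists>!x. x \<in> {a..f a} \<and> f x = x"
proof (rule ex_ex1I)
  have "continuous_on {a..f a} (\<lambda>x. f x - x)"
    using cont by (intro continuous_intros)
  moreover have "f (f a) \<le> f a"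
    using antimono[of a "f a"] \<open>a \<le> f a\<close> by simp
  ultimately obtain x where "a \<le> x" "x \<le> f a" "f x - x = 0"
    using IVT2'[of "\<lambda>x. f x - x" "f a" 0 a] \<open>a \<le> f a\<close> by auto
  then show "\<exists>x. x \<in> {a..f a} \<and> f x = x" by auto
next
  fix x y assume x: "x \<in> {a..f a} \<and> f x = x" and y: "y \<in> {a..f a} \<and> f y = y"
  show "x = y"
  proof (rule linorder_cases[of x y])
    assume "x < y" then show ?thesis using antimono[of x y] x y by auto
  next
    assume "y < x" then show ?thesis using antimono[of y x] x y by auto
  qed
qed

lemma laplace_ratio_ge_1:
  fixes x y :: real
  assumes "0 < x" "x < 1" "0 < y" "y \<le> 1"
  shows "1 \<le> (2 - x - y) / (1 - x * y)"
proof -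
  have "0 < 1 - x * y" using assms by (smt (verit) mult_left_le)
  moreover have "0 \<le> (1 - x) * (1 - y)" using assms by simp
  ultimately show ?thesis by (simp add: le_divide_eq algebra_simps)
qed

lemma laplace_ratio_eq_1_iff:
  fixes x y :: real
  assumes "0 < x" "x < 1" "0 < y" "y \<le> 1"
  shows "(2 - x - y) / (1 - x * y) = 1 \<longleftrightarrow> y = 1"
proof -
  have "0 < 1 - x * y" using assms by (smt (verit) mult_left_le)
  then have "(2 - x - y) / (1 - x * y) = 1 \<longleftrightarrow> (1 - x) * (1 - y) = 0"
    by (auto simp: divide_eq_1_iff algebra_simps)
  then show ?thesis using assms by simp
qed

lemma laplace_ratio_less_inverse:
  fixes x y :: real
  assumes "0 < x" "x < 1" "0 < y" "y \<le> 1"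
  shows "(2 - x - y) / (1 - x * y) < 1 / x"
proof -
  have "0 < 1 - x * y" using assms by (smt (verit) mult_left_le)
  moreover have "0 < (1 - x)\<^sup>2" using assms by simp
  then have "x * (2 - x - y) < 1 - x * y" by (simp add: power2_eq_square algebra_simps)
  ultimately show ?thesis using assms by (simp add: field_simps)
qed

text \<open>The cross-multiplied difference is \<open>(x\<^sub>2 - x\<^sub>1)(1 - y)\<^sup>2\<close>; the ratio is symmetric in its
  two arguments, so this covers monotonicity in either one.\<close>
lemma laplace_ratio_antimono:
  fixes x1 x2 y :: real
  assumes "0 < x1" "x1 \<le> x2" "0 < y" "y \<le> 1" "x2 * y < 1"
  shows "(2 - x2 - y) / (1 - x2 * y) \<le> (2 - x1 - y) / (1 - x1 * y)"
proof -
  have "x1 * y \<le> x2 * y" using assms by (simp add: mult_right_mono)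
  then have "0 < 1 - x1 * y" using assms by linarith
  moreover have "0 < 1 - x2 * y" using assms by linarith
  moreover have "0 \<le> (x2 - x1) * (1 - y)\<^sup>2" using assms by simp
  then have "(2 - x2 - y) * (1 - x1 * y) \<le> (2 - x1 - y) * (1 - x2 * y)"
    by (simp add: power2_eq_square algebra_simps)
  ultimately show ?thesis by (simp add: divide_le_eq le_divide_eq mult.commute)
qed

lemma DeltaC_eq_laplace_ratio:
  assumes "0 < b"
  shows "DeltaC l u dQ b =
    (2 - exp (- dQ / b) - exp (- (u - l - dQ) / b)) / (1 - exp (- dQ / b) * exp (- (u - l - dQ) / b))"
proof -
  have "exp (- (u - l) / b) = exp (- dQ / b) * exp (- (u - l - dQ) / b)"
    using assms by (simp add: exp_add[symmetric] field_simps)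
  then have Cp_l: "Cp l u l b = (1 - exp (- dQ / b) * exp (- (u - l - dQ) / b)) / 2"
    by (simp add: Cp_def field_simps)
  have Cp_shift: "Cp l u (l + dQ) b = (2 - exp (- dQ / b) - exp (- (u - l - dQ) / b)) / 2"
    by (simp add: Cp_def field_simps)
  have halves: "\<And>p q :: real. (p / 2) / (q / 2) = p / q" by simp
  show ?thesis unfolding DeltaC_def Cp_l Cp_shift by (rule halves)
qed

context
  fixes l u dQ :: real
  assumes dQ_pos: "0 < dQ" and dQ_le: "dQ \<le> u - l"
begin

private abbreviation (input) "X b \<equiv> exp (- dQ / b)"
private abbreviation (input) "Y b \<equiv> exp (- (u - l - dQ) / b)"

private lemma X_bounds: "0 < b \<Longrightarrow> 0 < X b \<and> X b < 1"
  using dQ_pos by simp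

private lemma Y_bounds: "0 < b \<Longrightarrow> 0 < Y b \<and> Y b \<le> 1"
  using dQ_le by (simp add: divide_nonpos_pos)

private lemma XY_less_1:
  assumes "0 < b" "0 < b'"
  shows "X b * Y b' < 1"
proof -
  have "X b * Y b' \<le> X b"
    using X_bounds[OF assms(1)] Y_bounds[OF assms(2)] by (intro mult_left_le) auto
  then show ?thesis using X_bounds[OF assms(1)] by linarith
qed

lemma one_le_DeltaC: "0 < b \<Longrightarrow> 1 \<le> DeltaC l u dQ b"
  using laplace_ratio_ge_1 X_bounds Y_bounds by (simp add: DeltaC_eq_laplace_ratio)

lemma DeltaC_eq_1_iff: "0 < b \<Longrightarrow> DeltaC l u dQ b = 1 \<longleftrightarrow> dQ = u - l"
  using laplace_ratio_eq_1_iff X_bounds Y_bounds by (simp add: DeltaC_eq_laplace_ratio)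

lemma ln_DeltaC_less:
  assumes "0 < b"
  shows "ln (DeltaC l u dQ b) < dQ / b"
proof -
  have "DeltaC l u dQ b < 1 / X b"
    using laplace_ratio_less_inverse X_bounds Y_bounds assms by (simp add: DeltaC_eq_laplace_ratio)
  also have "1 / X b = exp (dQ / b)" by (simp add: exp_minus field_simps)
  finally show ?thesis
    using one_le_DeltaC[OF assms] by (metis exp_gt_zero ln_exp ln_less_cancel_iff less_le_trans zero_less_one)
qed

lemma DeltaC_antimono:
  assumes "0 < b1" "b1 \<le> b2"
  shows "DeltaC l u dQ b2 \<le> DeltaC l u dQ b1"
proof -
  have b2: "0 < b2" using assms by simp
  have X: "X b1 \<le> X b2" using assms dQ_pos by (simp add: frac_le)
  have Y: "Y b1 \<le> Y b2" using assms dQ_le by (simp add: divide_left_mono_neg)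
  have XY: "X b1 * Y b2 < 1" "X b2 * Y b2 < 1"
    using XY_less_1 assms(1) b2 by simp_all
  have "DeltaC l u dQ b2 \<le> (2 - X b1 - Y b2) / (1 - X b1 * Y b2)"
    using laplace_ratio_antimono[of "X b1" "X b2" "Y b2"] X X_bounds[OF assms(1)] Y_bounds[OF b2] XY
    by (simp add: DeltaC_eq_laplace_ratio b2)
  also have "\<dots> = (2 - Y b2 - X b1) / (1 - Y b2 * X b1)"
    by (simp add: algebra_simps)
  also have "\<dots> \<le> (2 - Y b1 - X b1) / (1 - Y b1 * X b1)"
    using laplace_ratio_antimono[of "Y b1" "Y b2" "X b1"] Y X_bounds[OF assms(1)] Y_bounds[OF assms(1)] XY
    by (simp add: mult.commute)
  also have "\<dots> = DeltaC l u dQ b1"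
    using assms(1) by (simp add: DeltaC_eq_laplace_ratio algebra_simps)
  finally show ?thesis .
qed

lemma continuous_on_DeltaC: "continuous_on {0<..} (DeltaC l u dQ)"
proof -
  have "Cp l u l b \<noteq> 0" if "0 < b" for b
    using that dQ_pos dQ_le by (simp add: Cp_def divide_neg_pos)
  then show ?thesis
    unfolding DeltaC_def Cp_def by (intro continuous_intros) auto
qed

end

locale laplace_fixpoint =
  fixes l u dQ eps delta :: real
  assumes dQ_pos: "0 < dQ" and dQ_le: "dQ \<le> u - l" and budget_pos: "ln (1 - delta) < eps"
begin

abbreviation "b\<^sub>0 \<equiv> dQ / (eps - ln (1 - delta))"
abbreviation "f \<equiv> fmap l u dQ eps delta"

lemma b0_pos: "0 < b\<^sub>0"
  using dQ_pos budget_pos by simp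

lemma fmap_denominator_pos:
  assumes "b\<^sub>0 \<le> b"
  shows "0 < eps - ln (DeltaC l u dQ b) - ln (1 - delta)"
proof -
  have "0 < b" using assms b0_pos by linarith
  then have "ln (DeltaC l u dQ b) < dQ / b" using ln_DeltaC_less dQ_pos dQ_le by blast
  also have "\<dots> \<le> dQ / b\<^sub>0" by (rule frac_le) (use assms b0_pos dQ_pos in auto)
  also have "\<dots> = eps - ln (1 - delta)" using dQ_pos budget_pos by simp
  finally show ?thesis by simp
qed

lemma b0_le_fmap:
  assumes "b\<^sub>0 \<le> b"
  shows "b\<^sub>0 \<le> f b"
proof -
  have "0 \<le> ln (DeltaC l u dQ b)"
    using one_le_DeltaC[OF dQ_pos dQ_le] assms b0_pos by simp
  then show ?thesis
    using fmap_denominator_pos[OF assms] dQ_pos by (simp add: fmap_def frac_le)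
qed

lemma fmap_antimono:
  assumes "b\<^sub>0 \<le> b1" "b1 \<le> b2"
  shows "f b2 \<le> f b1"
proof -
  have "0 < b1" using assms b0_pos by linarith
  then have "DeltaC l u dQ b2 \<le> DeltaC l u dQ b1" "1 \<le> DeltaC l u dQ b2"
    using DeltaC_antimono[OF dQ_pos dQ_le] one_le_DeltaC[OF dQ_pos dQ_le] assms by auto
  then have "ln (DeltaC l u dQ b2) \<le> ln (DeltaC l u dQ b1)" by simp
  then show ?thesis
    using fmap_denominator_pos[OF assms(1)] dQ_pos by (simp add: fmap_def frac_le)
qed

lemma continuous_on_fmap: "continuous_on {b\<^sub>0..} f"
proof -
  have "{b\<^sub>0..} \<subseteq> {0<..}" using b0_pos by auto
  then have "continuous_on {b\<^sub>0..} (DeltaC l u dQ)"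
    using continuous_on_DeltaC[OF dQ_pos dQ_le] continuous_on_subset by blast
  moreover have "0 < DeltaC l u dQ b" if "b \<in> {b\<^sub>0..}" for b
    using one_le_DeltaC[OF dQ_pos dQ_le, of b] that b0_pos by simp
  ultimately show ?thesis
    unfolding fmap_def using fmap_denominator_pos
    by (intro continuous_intros) (auto simp: less_imp_neq[symmetric])
qed

lemma fmap_eq_b0_iff:
  assumes "0 < b"
  shows "f b = b\<^sub>0 \<longleftrightarrow> dQ = u - l"
proof -
  have "f b = b\<^sub>0 \<longleftrightarrow> ln (DeltaC l u dQ b) = 0"
    using dQ_pos by (simp add: fmap_def divide_cancel_left)
  also have "\<dots> \<longleftrightarrow> DeltaC l u dQ b = 1"
    using one_le_DeltaC[OF dQ_pos dQ_le assms] by simp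
  finally show ?thesis using DeltaC_eq_1_iff[OF dQ_pos dQ_le assms] by simp
qed

lemma fixed_point_eq_b0_iff:
  assumes "bs \<in> {b\<^sub>0..f b\<^sub>0}" "f bs = bs"
  shows "bs = b\<^sub>0 \<and> f b\<^sub>0 = b\<^sub>0 \<longleftrightarrow> dQ = u - l"
proof
  assume "bs = b\<^sub>0 \<and> f b\<^sub>0 = b\<^sub>0"
  then show "dQ = u - l" using fmap_eq_b0_iff[OF b0_pos] by blast
next
  assume "dQ = u - l"
  moreover have "0 < bs" using assms(1) b0_pos by simp
  ultimately have "f b\<^sub>0 = b\<^sub>0" "f bs = b\<^sub>0" using fmap_eq_b0_iff b0_pos by blast+
  then show "bs = b\<^sub>0 \<and> f b\<^sub>0 = b\<^sub>0" using assms(2) by simp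
qed

end

theorem theorem4p3:
  fixes l u dQ eps delta :: real
  assumes "l < u" and "0 < dQ" and "dQ \<le> u - l"
    and "0 \<le> eps" and "0 \<le> delta" and "delta < 1"
    and "exp eps / (1 - delta) > 1"
  defines "b0 \<equiv> dQ / (eps - ln (1 - delta))"
  shows "(\<forall>b\<ge>b0. eps - ln (DeltaC l u dQ b) - ln (1 - delta) \<noteq> 0)
       \<and> continuous_on {b0..} (fmap l u dQ eps delta)
       \<and> (\<exists>!bs. bs \<in> {b0..fmap l u dQ eps delta b0} \<and> fmap l u dQ eps delta bs = bs)
       \<and> (\<forall>bs. bs \<in> {b0..fmap l u dQ eps delta b0} \<and> fmap l u dQ eps delta bs = bs \<longrightarrow>
             ((bs = b0 \<and> fmap l u dQ eps delta b0 = b0) \<longleftrightarrow> dQ = u - l))"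
proof -
  have "1 - delta < exp eps" using assms(6,7) by (simp add: field_simps)
  then have "ln (1 - delta) < ln (exp eps)"
    using assms(6) by (subst ln_less_cancel_iff) auto
  then have "ln (1 - delta) < eps" by simp
  then interpret laplace_fixpoint l u dQ eps delta
    using assms(2,3) by unfold_locales
  have "\<exists>!bs. bs \<in> {b\<^sub>0..f b\<^sub>0} \<and> f bs = bs"
  proof (rule ex1_fixed_point_antimono)
    show "continuous_on {b\<^sub>0..f b\<^sub>0} f"
      using continuous_on_fmap by (rule continuous_on_subset) auto
  qed (simp_all add: b0_le_fmap fmap_antimono)
  moreover have "\<forall>b\<ge>b\<^sub>0. eps - ln (DeltaC l u dQ b) - ln (1 - delta) \<noteq> 0"
    using fmap_denominator_pos by (simp add: less_imp_neq[symmetric])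
  ultimately show ?thesis
    unfolding b0_def using continuous_on_fmap fixed_point_eq_b0_iff by blast
qed

end
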